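(* Let $D\ge1$ and let $\mathcal{F}$ be a collection of pairwise non-overlapping simplices on $\gamma_D$ in $\mathbb{R}^D$ whose vertex sets have union $V$ with $D+1\le|V|\le D+2$. Then $\mathcal{F}$ can be extended to a triangulation of $\mathrm{conv}(V)$ without adding new vertices, i.e. there is a triangulation of $\mathrm{conv}(V)$ with all vertices in $V$ containing every simplex of $\mathcal{F}$.
   Context: $\gamma_D=\{(t,t^2,\dots,t^D):t\in\mathbb{R}\}$. A simplex on $\gamma_D$ is $\mathrm{conv}(\sigma)$ for $\sigma\subseteq\gamma_D$ with $|\sigma|\le D+1$. Simplices overlap if $\mathrm{conv}(\sigma)\cap\mathrm{conv}(\tau)\supsetneq\mathrm{conv}(\sigma\cap\tau)$. *)

theory Defs
  imports "HOL-Analysis.Analysis"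
begin

text \<open>Points of R^D are represented as real ^ 'n with D = CARD('n).  Since the
coordinate type 'n carries no canonical order, an enumeration e of the coordinates
by {1..D} is fixed; the coordinate with index e i = k carries t^k.\<close>

definition coord_enum :: "('n::finite \<Rightarrow> nat) \<Rightarrow> bool" where
  "coord_enum e \<longleftrightarrow> bij_betw e UNIV {1..CARD('n)}"

definition moment_pt :: "('n::finite \<Rightarrow> nat) \<Rightarrow> real \<Rightarrow> real ^ 'n" where
  "moment_pt e t = (\<chi> i. t ^ (e i))"

definition moment_curve :: "('n::finite \<Rightarrow> nat) \<Rightarrow> (real ^ 'n) set" where
  "moment_curve e = range (moment_pt e)"

definition curve_simplex :: "('n::finite \<Rightarrow> nat) \<Rightarrow> (real ^ 'n) set \<Rightarrow> bool" where
  "curve_simplex e \<sigma> \<longleftrightarrow> \<sigma> \<subseteq> moment_curve e \<and> finite \<sigma> \<and> card \<sigma> \<le> CARD('n) + 1"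

definition overlap :: "'a::real_vector set \<Rightarrow> 'a set \<Rightarrow> bool" where
  "overlap \<sigma> \<tau> \<longleftrightarrow> convex hull \<sigma> \<inter> convex hull \<tau> \<supset> convex hull (\<sigma> \<inter> \<tau>)"

definition triangulation_of :: "'a::euclidean_space set set \<Rightarrow> 'a set \<Rightarrow> bool" where
  "triangulation_of T V \<longleftrightarrow>
     finite T \<and>
     (\<forall>\<sigma>\<in>T. \<sigma> \<subseteq> V \<and> \<not> affine_dependent \<sigma>) \<and>
     (\<forall>\<sigma>\<in>T. \<forall>\<tau>. \<tau> \<subseteq> \<sigma> \<longrightarrow> \<tau> \<in> T) \<and>
     (\<forall>\<sigma>\<in>T. \<forall>\<tau>\<in>T. convex hull \<sigma> \<inter> convex hull \<tau> = convex hull (\<sigma> \<inter> \<tau>)) \<and>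
     \<Union> ((\<lambda>\<sigma>. convex hull \<sigma>) ` T) = convex hull V"

end

theory Submission
  imports Defs "HOL-Computational_Algebra.Polynomial"
begin

(* Any D+1 points of the moment curve are affinely independent: an affine dependence among them
   would annihilate every polynomial of degree at most D, in particular the one vanishing at all
   but one of the points.  So if |V| = D+1, all subsets of V form a triangulation.  If |V| = D+2,
   V is a circuit: its affine dependence u is unique up to scaling and nowhere zero, splitting V
   into P = {u > 0} and N = {u < 0}, and the subsets of V not containing P (resp. N) form a
   triangulation of conv V.  A simplex containing P and another one containing N overlap at the
   Radon point, where conv P meets conv N; hence the non-overlapping family F avoids one of P and N
   and lies in the corresponding triangulation. *)

lemma moments_vanish_imp_zero:
  fixes t c :: "'a \<Rightarrow> real"
  assumes "finite W" "inj_on t W" "card W \<le> n + 1"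
    and moments: "\<And>k. k \<le> n \<Longrightarrow> (\<Sum>w\<in>W. c w * t w ^ k) = 0"
    and "w0 \<in> W"
  shows "c w0 = 0"
proof -
  define p where "p = (\<Prod>w\<in>W - {w0}. [:- t w, 1:])"
  have poly_p: "poly p x = (\<Prod>w\<in>W - {w0}. x - t w)" for x
    unfolding p_def by (simp add: poly_prod)
  have "degree p \<le> card (W - {w0})"
    using degree_prod_sum_le[of "W - {w0}" "\<lambda>w. [:- t w, 1:]"] assms by (simp add: p_def)
  then have deg: "degree p \<le> n"
    using assms by (simp add: card_Diff_singleton)
  have "(\<Sum>w\<in>W. c w * poly p (t w)) = (\<Sum>i\<le>degree p. coeff p i * (\<Sum>w\<in>W. c w * t w ^ i))"
    by (simp add: poly_altdef sum_distrib_left mult_ac sum.swap[of _ W])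
  also have "\<dots> = 0"
    using moments deg by simp
  finally have "(\<Sum>w\<in>W. c w * poly p (t w)) = 0" .
  moreover have "(\<Sum>w\<in>W. c w * poly p (t w)) = (\<Sum>w\<in>{w0}. c w * poly p (t w))"
    by (rule sum.mono_neutral_right) (use assms in \<open>auto simp: poly_p\<close>)
  moreover have "poly p (t w0) \<noteq> 0"
    using assms by (auto simp: poly_p inj_on_def)
  ultimately show ?thesis by simp
qed

lemma affine_independent_moment_curve:
  fixes e :: "'n::finite \<Rightarrow> nat"
  assumes "coord_enum e" "W \<subseteq> moment_curve e" "finite W" "card W \<le> CARD('n) + 1"
  shows "\<not> affine_dependent W"
proof
  assume "affine_dependent W"
  then obtain c w0 where c: "sum c W = 0" "(\<Sum>w\<in>W. c w *\<^sub>R w) = 0"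
    and w0: "w0 \<in> W" "c w0 \<noteq> 0"
    using assms(3) by (auto simp: affine_dependent_explicit_finite)
  have e_onto: "\<exists>i. e i = k" if "k \<in> {1..CARD('n)}" for k
    using assms(1) that unfolding coord_enum_def bij_betw_def by (metis imageE)
  then obtain i1 where i1: "e i1 = 1" by fastforce
  define t where "t w = w $ i1" for w :: "real ^ 'n"
  have coord: "w $ i = t w ^ e i" if "w \<in> W" for w i
    using that assms(2) by (auto simp: moment_curve_def moment_pt_def t_def i1)
  have inj: "inj_on t W"
    by (rule inj_onI) (simp add: vec_eq_iff coord)
  have moments: "(\<Sum>w\<in>W. c w * t w ^ k) = 0" if k: "k \<le> CARD('n)" for k
  proof (cases "k = 0")
    case True
    then show ?thesis using c(1) by simp
  next
    case False
    then obtain i where i: "e i = k" using e_onto k by fastforce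
    have "(\<Sum>w\<in>W. c w * w $ i) = 0"
      using arg_cong[OF c(2), of "\<lambda>x. x $ i"] by simp
    then show ?thesis by (simp add: coord i cong: sum.cong)
  qed
  have "c w0 = 0"
    using moments_vanish_imp_zero[OF assms(3) inj assms(4) moments w0(1)] .
  with w0(2) show False ..
qed

lemma convex_hull_subset_explicit:
  fixes V :: "'a::real_vector set"
  assumes "finite V" "S \<subseteq> V"
  shows "x \<in> convex hull S \<longleftrightarrow>
    (\<exists>a. (\<forall>v\<in>V. 0 \<le> a v) \<and> (\<forall>v\<in>V - S. a v = 0) \<and> sum a V = 1 \<and> (\<Sum>v\<in>V. a v *\<^sub>R v) = x)"
    (is "_ \<longleftrightarrow> (\<exists>a. ?coeffs a)")
proof -
  have "finite S"
    using assms finite_subset by blast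
  have restrict: "sum a V = sum a S" "(\<Sum>v\<in>V. a v *\<^sub>R v) = (\<Sum>v\<in>S. a v *\<^sub>R v)"
    if "\<forall>v\<in>V - S. a v = 0" for a :: "'a \<Rightarrow> real"
    using that assms by (auto intro: sum.mono_neutral_right)
  show ?thesis
  proof
    assume "x \<in> convex hull S"
    then obtain a where a: "\<forall>v\<in>S. 0 \<le> a v" "sum a S = 1" "(\<Sum>v\<in>S. a v *\<^sub>R v) = x"
      using \<open>finite S\<close> by (auto simp: convex_hull_finite)
    let ?a = "\<lambda>v. if v \<in> S then a v else 0"
    have "sum ?a S = sum a S" "(\<Sum>v\<in>S. ?a v *\<^sub>R v) = (\<Sum>v\<in>S. a v *\<^sub>R v)"
      by (simp_all cong: sum.cong)
    then show "\<exists>a. ?coeffs a"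
      using a restrict[of ?a] by (intro exI[of _ ?a]) auto
  next
    assume "\<exists>a. ?coeffs a"
    then obtain a where "?coeffs a"
      by blast
    then show "x \<in> convex hull S"
      using restrict[of a] assms \<open>finite S\<close> by (auto simp: convex_hull_finite intro!: exI[of _ a])
  qed
qed

lemma triangulation_of_Pow:
  fixes V :: "'a::euclidean_space set"
  assumes "\<not> affine_dependent V"
  shows "triangulation_of (Pow V) V"
proof -
  have "finite V"
    using assms aff_independent_finite by blast
  moreover have "convex hull \<sigma> \<inter> convex hull \<tau> = convex hull (\<sigma> \<inter> \<tau>)"
    if "\<sigma> \<subseteq> V" "\<tau> \<subseteq> V" for \<sigma> \<tau>
    using that by (intro convex_hull_Int[symmetric] affine_independent_subset[OF assms]) auto
  moreover have "(\<Union>\<sigma>\<in>Pow V. convex hull \<sigma>) = convex hull V"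
  proof (rule antisym)
    show "(\<Union>\<sigma>\<in>Pow V. convex hull \<sigma>) \<subseteq> convex hull V"
      by (intro UN_least hull_mono) simp
  qed blast
  ultimately show ?thesis
    using affine_independent_subset[OF assms] by (auto simp: triangulation_of_def)
qed

locale affine_circuit =
  fixes V :: "'a::euclidean_space set" and u :: "'a \<Rightarrow> real"
  assumes finite_V: "finite V"
    and proper_subset_independent: "\<And>W. W \<subset> V \<Longrightarrow> \<not> affine_dependent W"
    and sum_u: "sum u V = 0"
    and sum_scaleR_u: "(\<Sum>v\<in>V. u v *\<^sub>R v) = 0"
    and u_nontrivial: "\<exists>v\<in>V. u v \<noteq> 0"
begin

lemma dependence_zero_if_vanishes_at:
  assumes "sum w V = 0" "(\<Sum>v\<in>V. w v *\<^sub>R v) = 0" "v0 \<in> V" "w v0 = 0"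
  shows "\<forall>v\<in>V. w v = 0"
proof -
  have "sum w (V - {v0}) = 0" "(\<Sum>v\<in>V - {v0}. w v *\<^sub>R v) = 0"
    using assms finite_V by (simp_all add: sum_diff1)
  moreover have "\<not> affine_dependent (V - {v0})"
    using assms(3) by (intro proper_subset_independent) auto
  ultimately show ?thesis
    using assms(4) finite_V by (auto simp: affine_dependent_explicit_finite)
qed

lemma u_nonzero: "v \<in> V \<Longrightarrow> u v \<noteq> 0"
  using dependence_zero_if_vanishes_at[OF sum_u sum_scaleR_u] u_nontrivial by blast

lemma dependence_unique:
  assumes "sum w V = 0" "(\<Sum>v\<in>V. w v *\<^sub>R v) = 0"
  shows "\<exists>l. \<forall>v\<in>V. w v = l * u v"
proof -
  obtain v0 where v0: "v0 \<in> V" "u v0 \<noteq> 0"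
    using u_nontrivial by blast
  define l where "l = w v0 / u v0"
  have "sum (\<lambda>v. w v - l * u v) V = 0"
    using assms sum_u by (simp add: sum_subtractf flip: sum_distrib_left)
  moreover have "(\<Sum>v\<in>V. (w v - l * u v) *\<^sub>R v) = 0"
    using assms sum_scaleR_u
    by (simp add: sum_subtractf scaleR_left_diff_distrib flip: scaleR_scaleR scaleR_sum_right)
  ultimately have "\<forall>v\<in>V. w v - l * u v = 0"
    using v0 by (intro dependence_zero_if_vanishes_at) (auto simp: l_def)
  then show ?thesis by auto
qed

lemma same_point_coeffs_diff:
  assumes "sum a V = 1" "sum b V = 1" "(\<Sum>v\<in>V. a v *\<^sub>R v) = (\<Sum>v\<in>V. b v *\<^sub>R v)"
  shows "\<exists>l. \<forall>v\<in>V. a v - b v = l * u v"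
  using assms by (intro dependence_unique) (simp_all add: sum_subtractf scaleR_left_diff_distrib)

definition P where "P = {v\<in>V. 0 < u v}"
definition N where "N = {v\<in>V. u v < 0}"

lemma P_nonempty: "P \<noteq> {}"
proof
  assume "P = {}"
  then have "\<forall>v\<in>V. 0 \<le> - u v"
    by (auto simp: P_def not_less)
  then have "\<forall>v\<in>V. u v = 0"
    using sum_nonneg_eq_0_iff[OF finite_V, of "\<lambda>v. - u v"] sum_u by (simp add: sum_negf)
  then show False
    using u_nontrivial by blast
qed

lemma V_eq_P_Un_N: "V = P \<union> N"
  using u_nonzero by (force simp: P_def N_def)

definition triangulation_without_P where
  "triangulation_without_P = {\<sigma>. \<sigma> \<subseteq> V \<and> \<not> P \<subseteq> \<sigma>}"

lemma triangulation_without_P_Int: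
  assumes "\<sigma> \<in> triangulation_without_P" "\<tau> \<in> triangulation_without_P"
  shows "convex hull \<sigma> \<inter> convex hull \<tau> = convex hull (\<sigma> \<inter> \<tau>)"
proof (rule equalityI[OF subsetI])
  fix x assume x: "x \<in> convex hull \<sigma> \<inter> convex hull \<tau>"
  have \<sigma>: "\<sigma> \<subseteq> V" "\<not> P \<subseteq> \<sigma>" and \<tau>: "\<tau> \<subseteq> V" "\<not> P \<subseteq> \<tau>"
    using assms by (auto simp: triangulation_without_P_def)
  obtain a where a: "\<forall>v\<in>V. 0 \<le> a v" "\<forall>v\<in>V - \<sigma>. a v = 0" "sum a V = 1" "(\<Sum>v\<in>V. a v *\<^sub>R v) = x"
    using x convex_hull_subset_explicit[OF finite_V \<sigma>(1)] by auto
  obtain b where b: "\<forall>v\<in>V. 0 \<le> b v" "\<forall>v\<in>V - \<tau>. b v = 0" "sum b V = 1" "(\<Sum>v\<in>V. b v *\<^sub>R v) = x"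
    using x convex_hull_subset_explicit[OF finite_V \<tau>(1)] by auto
  obtain l where l: "\<forall>v\<in>V. a v - b v = l * u v"
    using same_point_coeffs_diff[of a b] a(3,4) b(3,4) by auto
  \<comment> \<open>vertices of P missing from \<sigma> resp. \<tau> force l \<le> 0 resp. l \<ge> 0\<close>
  obtain p where p: "p \<in> V" "p \<notin> \<sigma>" "0 < u p"
    using \<sigma>(2) by (auto simp: P_def)
  then have "l * u p \<le> 0"
    using l[rule_format, of p] a(2) b(1)[rule_format, of p] by simp
  with p(3) have "l \<le> 0"
    by (simp add: mult_le_0_iff)
  obtain q where q: "q \<in> V" "q \<notin> \<tau>" "0 < u q"
    using \<tau>(2) by (auto simp: P_def)
  then have "0 \<le> l * u q"
    using l[rule_format, of q] a(1)[rule_format, of q] b(2) by simp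
  with q(3) have "0 \<le> l"
    by (simp add: zero_le_mult_iff)
  with \<open>l \<le> 0\<close> have "\<forall>v\<in>V. a v = b v"
    using l by simp
  then have "\<forall>v\<in>V - \<sigma> \<inter> \<tau>. a v = 0"
    using a(2) b(2) by auto
  then show "x \<in> convex hull (\<sigma> \<inter> \<tau>)"
    using a \<sigma>(1) convex_hull_subset_explicit[OF finite_V, of "\<sigma> \<inter> \<tau>"] by blast
qed (simp add: hull_mono)

lemma convex_hull_subset_triangulation_without_P:
  "convex hull V \<subseteq> (\<Union>\<sigma>\<in>triangulation_without_P. convex hull \<sigma>)"
proof
  fix x assume "x \<in> convex hull V"
  then obtain a where a: "\<forall>v\<in>V. 0 \<le> a v" "sum a V = 1" "(\<Sum>v\<in>V. a v *\<^sub>R v) = x"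
    using convex_hull_subset_explicit[OF finite_V order_refl] by auto
  have "finite P"
    using finite_V by (simp add: P_def)
  \<comment> \<open>move x's barycentric coordinates along u until the first one on P reaches 0\<close>
  define \<mu> where "\<mu> = Min ((\<lambda>v. a v / u v) ` P)"
  have "\<mu> \<in> (\<lambda>v. a v / u v) ` P"
    unfolding \<mu>_def using \<open>finite P\<close> P_nonempty by (intro Min_in) auto
  then obtain p where p: "p \<in> P" "\<mu> = a p / u p"
    by blast
  have "0 \<le> \<mu>"
    using p a(1) by (auto simp: P_def)
  define a' where "a' v = a v - \<mu> * u v" for v
  have "0 \<le> a' v" if "v \<in> V" for v
  proof (cases "v \<in> P")
    case True
    then have "\<mu> \<le> a v / u v"
      using \<open>finite P\<close> by (simp add: \<mu>_def)
    with True show ?thesis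
      by (simp add: a'_def P_def pos_le_divide_eq)
  next
    case False
    then have "\<mu> * u v \<le> 0"
      using that \<open>0 \<le> \<mu>\<close> by (simp add: P_def mult_nonneg_nonpos)
    moreover have "0 \<le> a v"
      using a(1) that by blast
    ultimately show ?thesis
      by (simp add: a'_def)
  qed
  moreover have "sum a' V = 1"
    using a(2) sum_u by (simp add: a'_def sum_subtractf flip: sum_distrib_left)
  moreover have "(\<Sum>v\<in>V. a' v *\<^sub>R v) = x"
    using a(3) sum_scaleR_u
    by (simp add: a'_def sum_subtractf scaleR_left_diff_distrib flip: scaleR_scaleR scaleR_sum_right)
  moreover have "a' p = 0"
    using p by (simp add: a'_def P_def)
  ultimately have "x \<in> convex hull (V - {p})"
    using convex_hull_subset_explicit[OF finite_V, of "V - {p}"] by auto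
  moreover have "V - {p} \<in> triangulation_without_P"
    using p(1) by (auto simp: triangulation_without_P_def)
  ultimately show "x \<in> (\<Union>\<sigma>\<in>triangulation_without_P. convex hull \<sigma>)"
    by blast
qed

lemma triangulation_of_triangulation_without_P: "triangulation_of triangulation_without_P V"
proof -
  have subset_Pow: "triangulation_without_P \<subseteq> Pow V"
    by (auto simp: triangulation_without_P_def)
  then have "finite triangulation_without_P"
    using finite_V by (simp add: finite_subset)
  moreover have "\<sigma> \<subseteq> V \<and> \<not> affine_dependent \<sigma>" if "\<sigma> \<in> triangulation_without_P" for \<sigma>
  proof -
    have "\<sigma> \<subseteq> V" "\<not> P \<subseteq> \<sigma>"
      using that by (auto simp: triangulation_without_P_def)
    moreover have "P \<subseteq> V"
      by (auto simp: P_def)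
    ultimately show ?thesis
      using proper_subset_independent by blast
  qed
  moreover have "\<forall>\<sigma>\<in>triangulation_without_P. \<forall>\<tau>. \<tau> \<subseteq> \<sigma> \<longrightarrow> \<tau> \<in> triangulation_without_P"
    by (auto simp: triangulation_without_P_def)
  moreover have "(\<Union>\<sigma>\<in>triangulation_without_P. convex hull \<sigma>) = convex hull V"
  proof (rule antisym)
    show "(\<Union>\<sigma>\<in>triangulation_without_P. convex hull \<sigma>) \<subseteq> convex hull V"
      using subset_Pow by (intro UN_least hull_mono) auto
  qed (rule convex_hull_subset_triangulation_without_P)
  ultimately show ?thesis
    using triangulation_without_P_Int by (simp add: triangulation_of_def)
qed

lemma overlap_if_supersets_P_N:
  assumes "\<sigma> \<subset> V" "\<tau> \<subset> V" "P \<subseteq> \<sigma>" "N \<subseteq> \<tau>"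
  shows "overlap \<sigma> \<tau>"
proof -
  \<comment> \<open>the Radon point of the partition V = P \<union> N\<close>
  have "\<sigma> \<subseteq> V" "\<tau> \<subseteq> V"
    using assms(1,2) by auto
  define c where "c = sum u P"
  have "0 < c"
    unfolding c_def P_def using finite_V P_nonempty by (intro sum_pos) (auto simp: P_def)
  define a where "a v = (if 0 < u v then u v / c else 0)" for v
  define b where "b v = a v - u v / c" for v
  define x where "x = (\<Sum>v\<in>V. a v *\<^sub>R v)"
  have sum_a: "sum a V = 1"
    using \<open>0 < c\<close> finite_V
    by (simp add: a_def c_def P_def flip: sum.inter_filter sum_divide_distrib)
  have x_\<sigma>: "x \<in> convex hull \<sigma>"
    unfolding convex_hull_subset_explicit[OF finite_V \<open>\<sigma> \<subseteq> V\<close>] using assms(3) \<open>0 < c\<close> sum_a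
    by (intro exI[of _ a]) (auto simp: a_def x_def P_def)
  have "(\<Sum>v\<in>V. (u v / c) *\<^sub>R v) = (1 / c) *\<^sub>R (\<Sum>v\<in>V. u v *\<^sub>R v)"
    by (simp add: scaleR_sum_right)
  then have "(\<Sum>v\<in>V. (u v / c) *\<^sub>R v) = 0"
    by (simp add: sum_scaleR_u)
  then have "sum b V = 1" "(\<Sum>v\<in>V. b v *\<^sub>R v) = x"
    using sum_a sum_u
    by (simp_all add: b_def x_def sum_subtractf scaleR_left_diff_distrib flip: sum_divide_distrib)
  then have x_\<tau>: "x \<in> convex hull \<tau>"
    unfolding convex_hull_subset_explicit[OF finite_V \<open>\<tau> \<subseteq> V\<close>] using assms(4) \<open>0 < c\<close> u_nonzero
    by (intro exI[of _ b]) (force simp: a_def b_def N_def divide_nonpos_pos)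
  have "x \<notin> convex hull (\<sigma> \<inter> \<tau>)"
  proof
    assume "x \<in> convex hull (\<sigma> \<inter> \<tau>)"
    then obtain b' where
      b': "\<forall>v\<in>V - \<sigma> \<inter> \<tau>. b' v = 0" "sum b' V = 1" "(\<Sum>v\<in>V. b' v *\<^sub>R v) = x"
      using convex_hull_subset_explicit[OF finite_V, of "\<sigma> \<inter> \<tau>"] \<open>\<sigma> \<subseteq> V\<close> by blast
    obtain l where l: "\<forall>v\<in>V. a v - b' v = l * u v"
      using same_point_coeffs_diff[of a b'] sum_a b' by (auto simp: x_def)
    \<comment> \<open>a vertex outside \<sigma> forces l = 0, a vertex outside \<tau> then contradicts it\<close>
    obtain n where n: "n \<in> V" "n \<notin> \<sigma>"
      using assms(1) by blast
    moreover have "\<not> 0 < u n"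
      using n assms(3) by (auto simp: P_def)
    ultimately have "l * u n = 0"
      using l[rule_format, of n] b'(1) by (simp add: a_def)
    then have "l = 0"
      using u_nonzero n(1) by simp
    obtain p where p: "p \<in> V" "p \<notin> \<tau>"
      using assms(2) by blast
    then have "0 < u p"
      using assms(4) u_nonzero[of p] by (auto simp: N_def)
    then have "a p - b' p > 0"
      using b'(1) p \<open>0 < c\<close> by (simp add: a_def)
    with l \<open>l = 0\<close> p(1) show False
      by simp
  qed
  with x_\<sigma> x_\<tau> show ?thesis
    unfolding overlap_def using hull_mono[of "\<sigma> \<inter> \<tau>" \<sigma> convex] hull_mono[of "\<sigma> \<inter> \<tau>" \<tau> convex]
    by blast
qed

lemma affine_circuit_uminus: "affine_circuit V (\<lambda>v. - u v)"
proof
  show "(\<Sum>v\<in>V. - u v) = 0"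
    using sum_u by (simp add: sum_negf)
  show "(\<Sum>v\<in>V. - u v *\<^sub>R v) = 0"
    using sum_scaleR_u by (simp add: sum_negf)
  show "\<exists>v\<in>V. - u v \<noteq> 0"
    using u_nontrivial by simp
qed (use finite_V proper_subset_independent in auto)

lemma extends_to_triangulation:
  assumes proper: "\<forall>\<sigma>\<in>F. \<sigma> \<subset> V"
    and non_overlapping: "\<forall>\<sigma>\<in>F. \<forall>\<tau>\<in>F. \<sigma> \<noteq> \<tau> \<longrightarrow> \<not> overlap \<sigma> \<tau>"
  shows "\<exists>T. triangulation_of T V \<and> F \<subseteq> T"
proof (cases "\<exists>\<sigma>\<in>F. P \<subseteq> \<sigma>")
  case False
  then have "F \<subseteq> triangulation_without_P"
    using proper by (auto simp: triangulation_without_P_def)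
  then show ?thesis
    using triangulation_of_triangulation_without_P by blast
next
  case True
  then obtain \<sigma> where \<sigma>: "\<sigma> \<in> F" "P \<subseteq> \<sigma>" by blast
  have "\<not> N \<subseteq> \<tau>" if "\<tau> \<in> F" for \<tau>
  proof
    assume "N \<subseteq> \<tau>"
    then have "overlap \<sigma> \<tau>"
      using \<sigma> that proper by (intro overlap_if_supersets_P_N) auto
    moreover have "\<sigma> \<noteq> \<tau>"
      using \<sigma> \<open>N \<subseteq> \<tau>\<close> proper that V_eq_P_Un_N by blast
    ultimately show False
      using non_overlapping \<sigma>(1) that by blast
  qed
  interpret neg: affine_circuit V "\<lambda>v. - u v"
    by (rule affine_circuit_uminus)
  have "neg.P = N"
    by (auto simp: neg.P_def N_def)
  then have "F \<subseteq> neg.triangulation_without_P"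
    using proper \<open>\<And>\<tau>. \<tau> \<in> F \<Longrightarrow> \<not> N \<subseteq> \<tau>\<close> by (auto simp: neg.triangulation_without_P_def)
  then show ?thesis
    using neg.triangulation_of_triangulation_without_P by blast
qed

end

lemma extends_to_triangulation_general_position:
  fixes V :: "'a::euclidean_space set"
  assumes "finite V" "card V \<le> DIM('a) + 2"
    and general_position: "\<And>W. W \<subseteq> V \<Longrightarrow> card W \<le> DIM('a) + 1 \<Longrightarrow> \<not> affine_dependent W"
    and simplices: "\<forall>\<sigma>\<in>F. \<sigma> \<subseteq> V \<and> card \<sigma> \<le> DIM('a) + 1"
    and non_overlapping: "\<forall>\<sigma>\<in>F. \<forall>\<tau>\<in>F. \<sigma> \<noteq> \<tau> \<longrightarrow> \<not> overlap \<sigma> \<tau>"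
  shows "\<exists>T. triangulation_of T V \<and> F \<subseteq> T"
proof (cases "card V \<le> DIM('a) + 1")
  case True
  then have "triangulation_of (Pow V) V"
    by (intro triangulation_of_Pow general_position) auto
  then show ?thesis
    using simplices by blast
next
  case False
  with assms(2) have card_V: "card V = DIM('a) + 2"
    by simp
  then have "affine_dependent V"
    using \<open>finite V\<close> by (intro affine_dependent_biggerset) auto
  then obtain u where u: "sum u V = 0" "(\<Sum>v\<in>V. u v *\<^sub>R v) = 0" "\<exists>v\<in>V. u v \<noteq> 0"
    using \<open>finite V\<close> by (auto simp: affine_dependent_explicit_finite)
  have proper_independent: "\<not> affine_dependent W" if "W \<subset> V" for W
  proof (rule general_position)
    show "W \<subseteq> V"
      using that by blast
    show "card W \<le> DIM('a) + 1"
      using psubset_card_mono[OF \<open>finite V\<close> that] card_V by simp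
  qed
  interpret affine_circuit V u
    using \<open>finite V\<close> proper_independent u by unfold_locales
  have "\<forall>\<sigma>\<in>F. \<sigma> \<subset> V"
    using simplices card_V by auto
  then show ?thesis
    using non_overlapping by (rule extends_to_triangulation)
qed

theorem proposition4p5:
  fixes e :: "'n::finite \<Rightarrow> nat"
    and F :: "(real ^ 'n) set set"
    and V :: "(real ^ 'n) set"
  assumes "coord_enum e"
    and "\<forall>\<sigma>\<in>F. curve_simplex e \<sigma>"
    and "\<forall>\<sigma>\<in>F. \<forall>\<tau>\<in>F. \<sigma> \<noteq> \<tau> \<longrightarrow> \<not> overlap \<sigma> \<tau>"
    and "V = \<Union> F"
    and "CARD('n) + 1 \<le> card V" and "card V \<le> CARD('n) + 2"
  shows "\<exists>T. triangulation_of T V \<and> F \<subseteq> T"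
proof -
  \<comment> \<open>the lower bound on card V is only needed to make V finite\<close>
  have "0 < card V"
    using assms(5) by simp
  then have "finite V"
    by (rule card_ge_0_finite)
  have "V \<subseteq> moment_curve e"
    using assms(2,4) by (auto simp: curve_simplex_def)
  show ?thesis
  proof (rule extends_to_triangulation_general_position)
    show "\<not> affine_dependent W" if "W \<subseteq> V" "card W \<le> DIM(real ^ 'n) + 1" for W
      using that \<open>finite V\<close> \<open>V \<subseteq> moment_curve e\<close>
      by (intro affine_independent_moment_curve[OF assms(1)]) (auto intro: finite_subset)
    show "\<forall>\<sigma>\<in>F. \<sigma> \<subseteq> V \<and> card \<sigma> \<le> DIM(real ^ 'n) + 1"
      using assms(2,4) by (auto simp: curve_simplex_def)
  qed (use \<open>finite V\<close> assms(3,6) in auto)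
qed

end
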